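(* For all integers $r,t$ with $3\le t\le r$, \[ f_t(r,r)=\rho_t\big(T(r+1,r)\big)=\frac{1}{r+1}\Big(\binom{r+1}{t}-\binom{r-1}{t-2}\Big), \] where $T(r+1,r)$ is $K_{r+1}$ with one edge removed.
   Context: $\mathcal{G}(\Delta,\omega)$ denotes the class of finite simple graphs $G$ with maximum degree $\Delta(G)\le\Delta$ and clique number $\omega(G)\le\omega$. $k_t(G)$ is the number of copies of $K_t$ in $G$ and $\rho_t(G)=k_t(G)/|V(G)|$. $f_t(\Delta,\omega)=\sup\{\rho_t(G): G\in\mathcal{G}(\Delta,\omega),\ |V(G)|\ge 1\}$. $T(n,r)$ denotes the $r$-partite Turán graph on $n$ vertices. *)

theory Defs
  imports Complex_Main
begin

text \<open>A finite simple graph on vertex set V (a finite set of naturals; every finite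
graph is isomorphic to one of this form) with edge set E, a set of 2-element subsets of V.\<close>
definition simple_graph :: "nat set \<Rightarrow> nat set set \<Rightarrow> bool" where
  "simple_graph V E \<longleftrightarrow> finite V \<and> (\<forall>e\<in>E. e \<subseteq> V \<and> card e = 2)"

definition degree :: "nat set set \<Rightarrow> nat \<Rightarrow> nat" where
  "degree E v = card {u. {u, v} \<in> E}"

definition is_clique :: "nat set \<Rightarrow> nat set set \<Rightarrow> nat set \<Rightarrow> bool" where
  "is_clique V E S \<longleftrightarrow> S \<subseteq> V \<and> (\<forall>u\<in>S. \<forall>w\<in>S. u \<noteq> w \<longrightarrow> {u, w} \<in> E)"

definition k_t :: "nat \<Rightarrow> nat set \<Rightarrow> nat set set \<Rightarrow> nat" where
  "k_t t V E = card {S. is_clique V E S \<and> card S = t}"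

definition rho_t :: "nat \<Rightarrow> nat set \<Rightarrow> nat set set \<Rightarrow> real" where
  "rho_t t V E = real (k_t t V E) / real (card V)"

definition in_class :: "nat \<Rightarrow> nat \<Rightarrow> nat set \<Rightarrow> nat set set \<Rightarrow> bool" where
  "in_class \<Delta> \<omega> V E \<longleftrightarrow> simple_graph V E \<and> (\<forall>v\<in>V. degree E v \<le> \<Delta>)
     \<and> (\<forall>S. is_clique V E S \<longrightarrow> card S \<le> \<omega>)"

definition f_t :: "nat \<Rightarrow> nat \<Rightarrow> nat \<Rightarrow> real" where
  "f_t t \<Delta> \<omega> = Sup {rho_t t V E | V E. in_class \<Delta> \<omega> V E \<and> card V \<ge> 1}"

text \<open>Turan graph T(n,r): vertices 0..n-1, part of vertex v is v mod r (balanced parts),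
edges join vertices in different parts.\<close>
definition turan_V :: "nat \<Rightarrow> nat set" where
  "turan_V n = {0..<n}"

definition turan_E :: "nat \<Rightarrow> nat \<Rightarrow> nat set set" where
  "turan_E n r = {{u, v} | u v. u < n \<and> v < n \<and> u mod r \<noteq> v mod r}"

end

theory Submission
  imports Defs
begin

(*
  T(r+1,r) is K_{r+1} minus the edge {0, r}; its t-cliques are the t-subsets avoiding that edge,
  which gives the formula, and it lies in G(r,r). For the upper bound k_t(G) <= c |V(G)| with
  c = rho_t(T(r+1,r)) we induct on |V(G)|. Call a vertex v reducible if it has degree r and its
  closed neighbourhood N[v] (r+1 vertices) misses exactly one edge, or, when t = 3 and r >= 6,
  exactly two edges. Degrees at most r force every vertex of N[v] to have at most as many
  neighbours outside N[v] as non-neighbours inside it; this pins down the t-cliques meeting N[v]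
  and shows there are at most (r+1) c of them, so deleting N[v] lets the induction proceed.
  If no vertex is reducible, the link of each vertex v is either smaller than r or has r
  vertices and (since omega <= r) at least two missing edges, and counting (t-1)-subsets of the
  link shows that v lies in at most t c cliques; double counting finishes the proof.
*)

lemma card_supersets_of_size:
  assumes "finite X" "P \<subseteq> X" "card P \<le> k"
  shows "card {F. F \<subseteq> X \<and> card F = k \<and> P \<subseteq> F} = (card X - card P) choose (k - card P)"
proof -
  have "finite P" using assms finite_subset by blast
  have "bij_betw (\<lambda>F. F - P) {F. F \<subseteq> X \<and> card F = k \<and> P \<subseteq> F}
          {G. G \<subseteq> X - P \<and> card G = k - card P}"
  proof (rule bij_betw_byWitness[where f' = "\<lambda>G. G \<union> P"])
    show "(\<lambda>G. G \<union> P) ` {G. G \<subseteq> X - P \<and> card G = k - card P}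
            \<subseteq> {F. F \<subseteq> X \<and> card F = k \<and> P \<subseteq> F}"
    proof (rule image_subsetI)
      fix G assume G: "G \<in> {G. G \<subseteq> X - P \<and> card G = k - card P}"
      then have "finite G" using assms(1) finite_subset by blast
      then have "card (G \<union> P) = card G + card P"
        using G \<open>finite P\<close> by (subst card_Un_disjoint) auto
      then show "G \<union> P \<in> {F. F \<subseteq> X \<and> card F = k \<and> P \<subseteq> F}" using G assms(2,3) by auto
    qed
  qed (use \<open>finite P\<close> in \<open>auto simp: card_Diff_subset\<close>)
  then have "card {F. F \<subseteq> X \<and> card F = k \<and> P \<subseteq> F} = card (X - P) choose (k - card P)"
    using bij_betw_same_card assms(1) by (fastforce simp: n_subsets)
  then show ?thesis using \<open>finite P\<close> assms(2) by (simp add: card_Diff_subset)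
qed

lemma card_supersets_of_size_eq_0:
  assumes "finite X" "k < card P"
  shows "card {F. F \<subseteq> X \<and> card F = k \<and> P \<subseteq> F} = 0"
proof -
  have "{F. F \<subseteq> X \<and> card F = k \<and> P \<subseteq> F} = {}"
    using assms card_mono finite_subset by (metis (mono_tags, lifting) empty_Collect_eq leD)
  then show ?thesis by (simp only: card.empty)
qed

lemma card_non_supersets_of_size:
  assumes "finite X" "P \<subseteq> X" "card P \<le> k"
  shows "card {F. F \<subseteq> X \<and> card F = k \<and> \<not> P \<subseteq> F}
           = (card X choose k) - ((card X - card P) choose (k - card P))"
proof -
  have "{F. F \<subseteq> X \<and> card F = k \<and> \<not> P \<subseteq> F}
          = {F. F \<subseteq> X \<and> card F = k} - {F. F \<subseteq> X \<and> card F = k \<and> P \<subseteq> F}"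
    by blast
  moreover have "card ({F. F \<subseteq> X \<and> card F = k} - {F. F \<subseteq> X \<and> card F = k \<and> P \<subseteq> F})
     = card {F. F \<subseteq> X \<and> card F = k} - card {F. F \<subseteq> X \<and> card F = k \<and> P \<subseteq> F}"
    using assms(1) by (intro card_Diff_subset) (auto intro: finite_subset[of _ "Pow X"])
  ultimately show ?thesis using assms by (simp add: n_subsets card_supersets_of_size)
qed

lemma card_ge_2E:
  assumes "2 \<le> card A"
  obtains a b where "a \<in> A" "b \<in> A" "a \<noteq> b"
proof -
  have "finite A" using assms card.infinite by force
  moreover have "\<not> card A \<le> Suc 0" using assms by simp
  ultimately show ?thesis using card_le_Suc0_iff_eq that by blast
qed

section \<open>Binomial estimates for the Turan density\<close>

definition turan_density :: "nat \<Rightarrow> nat \<Rightarrow> real" where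
  "turan_density r t = (real ((r + 1) choose t) - real ((r - 1) choose (t - 2))) / real (r + 1)"

lemma times_turan_density:
  assumes "1 \<le> t"
  shows "real t * turan_density r t
           = real (r choose (t - 1)) - real t * real ((r - 1) choose (t - 2)) / real (r + 1)"
proof -
  have "t * ((r + 1) choose t) = (r + 1) * (r choose (t - 1))"
    using times_binomial_minus1_eq[of t "r + 1"] assms by simp
  then have "real t * real ((r + 1) choose t) = real (r + 1) * real (r choose (t - 1))"
    by (metis of_nat_mult)
  then show ?thesis
    by (simp add: turan_density_def right_diff_distrib diff_divide_distrib)
qed

lemma binomial_le_times_turan_density:
  assumes "2 \<le> t" "t \<le> r"
  shows "real ((r - 1) choose (t - 1)) \<le> real t * turan_density r t"
proof -
  have "r choose (t - 1) = ((r - 1) choose (t - 2)) + ((r - 1) choose (t - 1))"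
    using choose_reduce_nat[of r "t - 1"] assms by (simp add: numeral_2_eq_2)
  moreover have "real t * real ((r - 1) choose (t - 2)) \<le> real (r + 1) * real ((r - 1) choose (t - 2))"
    using assms by (intro mult_right_mono) auto
  ultimately show ?thesis
    using times_turan_density[of t r] assms by (simp add: divide_le_eq mult.commute)
qed

lemma three_times_turan_density_ge:
  assumes "3 \<le> r"
  shows "real (r choose 2) - 3 \<le> 3 * turan_density r 3"
    and "r \<le> 5 \<Longrightarrow> real (r choose 2) - 2 \<le> 3 * turan_density r 3"
proof -
  have density: "3 * turan_density r 3 = real (r choose 2) - 3 * real (r - 1) / real (r + 1)"
    using times_turan_density[of 3 r] by (simp add: numeral_eq_Suc)
  have "3 * real (r - 1) / real (r + 1) \<le> 3" using assms by (simp add: divide_le_eq)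
  then show "real (r choose 2) - 3 \<le> 3 * turan_density r 3" using density by linarith
  assume "r \<le> 5"
  then have "3 * real (r - 1) / real (r + 1) \<le> 2" using assms by (simp add: of_nat_diff divide_le_eq)
  then show "real (r choose 2) - 2 \<le> 3 * turan_density r 3" using density by linarith
qed

lemma turan_density_cubic_ineq:
  fixes t r :: nat
  assumes "4 \<le> t" "t \<le> r"
  shows "real t * (real r - 1) * (real r - 2) \<le> (real t - 2) * (real r + 1) * (2 * real r - real t - 1)"
proof -
  obtain a b where "t = 4 + a" "r = t + b" using assms le_Suc_ex by blast
  then have "(real t - 2) * (real r + 1) * (2 * real r - real t - 1) - real t * (real r - 1) * (real r - 2)
     = 6 + 6 * real b + 5 * real a + 6 * real a * real b + real a * real b ^ 2 + real a ^ 2 + real a ^ 2 * real b"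
    by (simp add: algebra_simps power2_eq_square)
  moreover have "0 \<le> 6 + 6 * real b + 5 * real a + 6 * real a * real b + real a * real b ^ 2 + real a ^ 2 + real a ^ 2 * real b"
    by simp
  ultimately show ?thesis by linarith
qed

lemma times_turan_density_ge:
  assumes "4 \<le> t" "t \<le> r"
  shows "real (r choose (t - 1)) - (2 * real ((r - 2) choose (t - 3)) - real ((r - 3) choose (t - 4)))
           \<le> real t * turan_density r t"
proof -
  \<comment> \<open>The absorption identities express X and Y through B; the claim becomes the cubic inequality.\<close>
  define B where "B = real ((r - 3) choose (t - 4))"
  define X where "X = real ((r - 2) choose (t - 3))"
  define Y where "Y = real ((r - 1) choose (t - 2))"
  have "(t - 3) * ((r - 2) choose (t - 3)) = (r - 2) * ((r - 3) choose (t - 4))"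
    using times_binomial_minus1_eq[of "t - 3" "r - 2"] assms by (simp add: diff_diff_add)
  then have "real (t - 3) * X = real (r - 2) * B"
    unfolding B_def X_def by (metis of_nat_mult)
  then have X: "(real t - 3) * X = (real r - 2) * B"
    using assms by (simp add: of_nat_diff)
  have "(t - 2) * ((r - 1) choose (t - 2)) = (r - 1) * ((r - 2) choose (t - 3))"
    using times_binomial_minus1_eq[of "t - 2" "r - 1"] assms by (simp add: diff_diff_add numeral_eq_Suc)
  then have "real (t - 2) * Y = real (r - 1) * X"
    unfolding X_def Y_def by (metis of_nat_mult)
  then have Y: "(real t - 2) * Y = (real r - 1) * X"
    using assms by (simp add: of_nat_diff)
  have pos: "(real t - 2) * (real t - 3) > 0" using assms by simp
  have "(real t - 2) * (real t - 3) * (real t * Y) = real t * (real t - 3) * ((real t - 2) * Y)"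
    by (simp add: algebra_simps)
  also have "\<dots> = real t * (real r - 1) * ((real t - 3) * X)"
    unfolding Y by (simp add: algebra_simps)
  also have "\<dots> = real t * (real r - 1) * (real r - 2) * B"
    unfolding X by (simp add: algebra_simps)
  also have "\<dots> \<le> (real t - 2) * (real r + 1) * (2 * real r - real t - 1) * B"
    using turan_density_cubic_ineq[OF assms] by (rule mult_right_mono) (simp add: B_def)
  also have "\<dots> = (real t - 2) * (real r + 1) * (2 * ((real r - 2) * B) - (real t - 3) * B)"
    by (simp add: algebra_simps)
  also have "\<dots> = (real t - 2) * (real t - 3) * (real (r + 1) * (2 * X - B))"
    unfolding X[symmetric] by (simp add: algebra_simps)
  finally have "real t * Y \<le> real (r + 1) * (2 * X - B)"
    using pos mult_le_cancel_left_pos by blast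
  then have "real t * Y / real (r + 1) \<le> 2 * X - B"
    by (simp add: divide_le_eq mult.commute)
  then show ?thesis using times_turan_density[of t r] assms unfolding B_def X_def Y_def by simp
qed

lemma binomial_le_binomial_add_2: "n choose k \<le> (n + 2) choose (k + 2)"
  by (simp add: numeral_2_eq_2)

lemma binomial_minus_le:
  assumes "1 \<le> r" "2 \<le> t"
  shows "(r - 1) choose (t - 2) \<le> (r + 1) choose t"
proof -
  have e: "r - 1 + 2 = r + 1" "t - 2 + 2 = t" using assms by simp_all
  show ?thesis using binomial_le_binomial_add_2[of "r - 1" "t - 2"] unfolding e .
qed

definition neighbours :: "nat set set \<Rightarrow> nat \<Rightarrow> nat set" where
  "neighbours E v = {u. {u, v} \<in> E}"

definition cliques :: "nat \<Rightarrow> nat set \<Rightarrow> nat set set \<Rightarrow> nat set set" where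
  "cliques t V E = {S. is_clique V E S \<and> card S = t}"

lemma mem_neighbours_iff [simp]: "a \<in> neighbours E b \<longleftrightarrow> {a, b} \<in> E"
  by (simp add: neighbours_def)

lemma k_t_eq_card_cliques: "k_t t V E = card (cliques t V E)"
  by (simp add: k_t_def cliques_def)

lemma degree_eq_card_neighbours: "degree E v = card (neighbours E v)"
  by (simp add: degree_def neighbours_def)

lemma finite_cliques: "finite V \<Longrightarrow> finite (cliques t V E)"
  by (rule finite_subset[of _ "Pow V"]) (auto simp: cliques_def is_clique_def)

lemma sum_card_cliques_containing:
  assumes "finite V"
  shows "(\<Sum>v\<in>V. card {K \<in> cliques t V E. v \<in> K}) = t * card (cliques t V E)"
proof -
  have "(\<Sum>v\<in>V. card {K \<in> cliques t V E. v \<in> K}) = (\<Sum>v\<in>V. \<Sum>K\<in>cliques t V E. if v \<in> K then 1 else 0)"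
    using finite_cliques[OF assms] by (simp add: sum.If_cases Int_def)
  also have "\<dots> = (\<Sum>K\<in>cliques t V E. \<Sum>v\<in>V. if v \<in> K then 1 else 0)"
    by (rule sum.swap)
  also have "\<dots> = (\<Sum>K\<in>cliques t V E. t)"
  proof (rule sum.cong)
    fix K assume "K \<in> cliques t V E"
    then have "K \<subseteq> V" "card K = t" by (auto simp: cliques_def is_clique_def)
    then show "(\<Sum>v\<in>V. if v \<in> K then 1 else 0) = t"
      using assms by (simp add: sum.If_cases Int_absorb1)
  qed simp
  finally show ?thesis by simp
qed

lemma cliques_remove:
  "cliques t (V - S) {e \<in> E. e \<subseteq> V - S} = {K \<in> cliques t V E. K \<inter> S = {}}"
  unfolding cliques_def is_clique_def by auto

lemma card_cliques_remove:
  assumes "finite V"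
  shows "card (cliques t V E)
           = card (cliques t (V - S) {e \<in> E. e \<subseteq> V - S}) + card {K \<in> cliques t V E. K \<inter> S \<noteq> {}}"
proof -
  have "card (cliques t V E)
          = card ({K \<in> cliques t V E. K \<inter> S = {}} \<union> {K \<in> cliques t V E. K \<inter> S \<noteq> {}})"
    by (rule arg_cong[where f = card]) blast
  also have "\<dots> = card {K \<in> cliques t V E. K \<inter> S = {}} + card {K \<in> cliques t V E. K \<inter> S \<noteq> {}}"
    by (rule card_Un_disjoint) (use finite_cliques[OF assms] in auto)
  finally show ?thesis unfolding cliques_remove .
qed

lemma in_class_remove:
  assumes "in_class \<Delta> \<omega> V E"
  shows "in_class \<Delta> \<omega> (V - S) {e \<in> E. e \<subseteq> V - S}"
proof -
  have V: "finite V" and E: "\<forall>e\<in>E. e \<subseteq> V \<and> card e = 2"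
    using assms by (simp_all add: in_class_def simple_graph_def)
  have "degree {e \<in> E. e \<subseteq> V - S} v \<le> \<Delta>" if "v \<in> V - S" for v
  proof -
    have "neighbours E v \<subseteq> V" using E by (auto simp: neighbours_def)
    then have "card (neighbours {e \<in> E. e \<subseteq> V - S} v) \<le> card (neighbours E v)"
      using finite_subset[OF _ V] by (intro card_mono) (auto simp: neighbours_def)
    also have "\<dots> \<le> \<Delta>" using assms that by (simp add: in_class_def degree_eq_card_neighbours)
    finally show ?thesis by (simp add: degree_eq_card_neighbours)
  qed
  moreover have "card T \<le> \<omega>" if "is_clique (V - S) {e \<in> E. e \<subseteq> V - S} T" for T
  proof -
    have "is_clique V E T" using that unfolding is_clique_def by auto
    then show ?thesis using assms by (simp add: in_class_def)
  qed
  moreover have "simple_graph (V - S) {e \<in> E. e \<subseteq> V - S}"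
    using V E unfolding simple_graph_def by auto
  ultimately show ?thesis unfolding in_class_def by blast
qed

section \<open>The Turan graph T(r+1,r)\<close>

lemma turan_edge_iff: "{a, b} \<in> turan_E n r \<longleftrightarrow> a < n \<and> b < n \<and> a mod r \<noteq> b mod r"
  unfolding turan_E_def by (auto simp: doubleton_eq_iff)

text \<open>In T(r+1,r) the vertices 0 and r form the only part of size two.\<close>
lemma turan_edge_iff_ne_0_r:
  assumes "1 \<le> r" "a < r + 1" "b < r + 1" "a \<noteq> b"
  shows "{a, b} \<in> turan_E (r + 1) r \<longleftrightarrow> {a, b} \<noteq> {0, r}"
proof -
  have "x mod r = (if x = r then 0 else x)" if "x < r + 1" for x
    using that assms(1) by auto
  then show ?thesis using assms by (auto simp: turan_edge_iff doubleton_eq_iff)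
qed

lemma turan_clique_iff:
  assumes "1 \<le> r"
  shows "is_clique (turan_V (r + 1)) (turan_E (r + 1) r) S \<longleftrightarrow> S \<subseteq> {0..<r + 1} \<and> \<not> {0, r} \<subseteq> S"
proof -
  have "is_clique (turan_V (r + 1)) (turan_E (r + 1) r) S
          \<longleftrightarrow> S \<subseteq> {0..<r + 1} \<and> (\<forall>u\<in>S. \<forall>w\<in>S. u \<noteq> w \<longrightarrow> {u, w} \<noteq> {0, r})"
    unfolding is_clique_def turan_V_def
    using turan_edge_iff_ne_0_r[OF assms] by (meson atLeastLessThan_iff subsetD)
  also have "\<dots> \<longleftrightarrow> S \<subseteq> {0..<r + 1} \<and> \<not> {0, r} \<subseteq> S"
    using assms by (auto simp: doubleton_eq_iff) (metis gr0I)
  finally show ?thesis .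
qed

lemma k_t_turan:
  assumes "1 \<le> r" "2 \<le> t"
  shows "k_t t (turan_V (r + 1)) (turan_E (r + 1) r) = ((r + 1) choose t) - ((r - 1) choose (t - 2))"
proof -
  have "k_t t (turan_V (r + 1)) (turan_E (r + 1) r)
          = card {F. F \<subseteq> {0..<r + 1} \<and> card F = t \<and> \<not> {0, r} \<subseteq> F}"
    unfolding k_t_def turan_clique_iff[OF assms(1)] by (rule arg_cong[where f = card]) blast
  also have "\<dots> = ((r + 1) choose t) - ((r - 1) choose (t - 2))"
    using card_non_supersets_of_size[of "{0..<r + 1}" "{0, r}" t] assms by (simp add: numeral_2_eq_2)
  finally show ?thesis .
qed

lemma in_class_turan:
  assumes "1 \<le> r"
  shows "in_class r r (turan_V (r + 1)) (turan_E (r + 1) r)"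
  unfolding in_class_def
proof (intro conjI ballI allI impI)
  show "simple_graph (turan_V (r + 1)) (turan_E (r + 1) r)"
    unfolding simple_graph_def turan_V_def turan_E_def by (auto simp: card_insert_if)
  fix v assume "v \<in> turan_V (r + 1)"
  have "neighbours (turan_E (r + 1) r) v \<subseteq> {0..<r + 1} - {v}"
    by (auto simp: neighbours_def turan_edge_iff)
  then show "degree (turan_E (r + 1) r) v \<le> r"
    using card_mono[of "{0..<r + 1} - {v}"] \<open>v \<in> turan_V (r + 1)\<close>
    by (fastforce simp: degree_eq_card_neighbours turan_V_def)
next
  fix S assume "is_clique (turan_V (r + 1)) (turan_E (r + 1) r) S"
  then have "S \<subseteq> {0..<r + 1} - {0} \<or> S \<subseteq> {0..<r + 1} - {r}"
    using turan_clique_iff[OF assms] by auto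
  then show "card S \<le> r"
    using card_mono[of "{0..<r + 1} - {0}" S] card_mono[of "{0..<r + 1} - {r}" S] assms by auto
qed

definition closed_neighbours :: "nat set set \<Rightarrow> nat \<Rightarrow> nat set" where
  "closed_neighbours E v = insert v (neighbours E v)"

definition missing_edges :: "nat set set \<Rightarrow> nat \<Rightarrow> nat set set" where
  "missing_edges E v
     = {{a, b} | a b. a \<in> neighbours E v \<and> b \<in> neighbours E v \<and> a \<noteq> b \<and> {a, b} \<notin> E}"

definition subsets_with_missing_edge :: "nat set set \<Rightarrow> nat \<Rightarrow> nat \<Rightarrow> nat set set" where
  "subsets_with_missing_edge E v k
     = {F. F \<subseteq> neighbours E v \<and> card F = k \<and> (\<exists>p\<in>missing_edges E v. p \<subseteq> F)}"

locale class_graph =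
  fixes V :: "nat set" and E :: "nat set set" and r :: nat
  assumes in_class: "in_class r r V E"
begin

lemma finite_V: "finite V"
  using in_class by (simp add: in_class_def simple_graph_def)

lemma edge_in_V: "{a, b} \<in> E \<Longrightarrow> a \<noteq> b \<and> a \<in> V \<and> b \<in> V"
  using in_class unfolding in_class_def simple_graph_def by (auto simp: card_insert_if split: if_splits)

lemma neighbours_subset: "neighbours E v \<subseteq> V - {v}"
proof
  fix u assume "u \<in> neighbours E v"
  then show "u \<in> V - {v}" using edge_in_V[of u v] by simp
qed

lemma finite_neighbours: "finite (neighbours E v)"
  using neighbours_subset finite_V finite_subset by blast

lemma card_neighbours_le: "v \<in> V \<Longrightarrow> card (neighbours E v) \<le> r"
  using in_class by (simp add: in_class_def degree_eq_card_neighbours)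

lemma card_clique_le: "is_clique V E S \<Longrightarrow> card S \<le> r"
  using in_class by (simp add: in_class_def)

lemma cliques_edge: "K \<in> cliques t V E \<Longrightarrow> a \<in> K \<Longrightarrow> b \<in> K \<Longrightarrow> a \<noteq> b \<Longrightarrow> {a, b} \<in> E"
  by (auto simp: cliques_def is_clique_def)

lemma cliques_card: "K \<in> cliques t V E \<Longrightarrow> finite K \<and> K \<subseteq> V \<and> card K = t"
  by (auto simp: cliques_def is_clique_def intro: finite_subset[OF _ finite_V])

lemma missing_edgesE:
  assumes "p \<in> missing_edges E v"
  obtains a b where "p = {a, b}" "a \<in> neighbours E v" "b \<in> neighbours E v" "a \<noteq> b" "{a, b} \<notin> E"
  using assms by (auto simp: missing_edges_def simp del: mem_neighbours_iff)

lemma missing_edge_not_subset_clique: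
  assumes "K \<in> cliques t V E" "p \<in> missing_edges E v"
  shows "\<not> p \<subseteq> K"
proof
  assume "p \<subseteq> K"
  obtain a b where "p = {a, b}" "a \<noteq> b" "{a, b} \<notin> E"
    using assms(2) by (rule missing_edgesE)
  then show False using \<open>p \<subseteq> K\<close> cliques_edge[OF assms(1), of a b] by simp
qed

lemma insert_is_clique:
  assumes "v \<in> V" "F \<subseteq> neighbours E v" "\<forall>a\<in>F. \<forall>b\<in>F. a \<noteq> b \<longrightarrow> {a, b} \<in> E"
  shows "is_clique V E (insert v F)"
proof -
  have "{a, v} \<in> E" "{v, a} \<in> E" if "a \<in> F" for a
    using that assms(2) by (auto simp: insert_commute)
  then show ?thesis
    using assms neighbours_subset[of v] unfolding is_clique_def by auto
qed

lemma card_cliques_containing: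
  assumes "v \<in> V" "1 \<le> t"
  shows "card {K \<in> cliques t V E. v \<in> K} = card {F \<in> cliques (t - 1) V E. F \<subseteq> neighbours E v}"
proof (rule bij_betw_same_card[of "\<lambda>K. K - {v}"], rule bij_betw_byWitness[where f' = "insert v"])
  show "(\<lambda>K. K - {v}) ` {K \<in> cliques t V E. v \<in> K} \<subseteq> {F \<in> cliques (t - 1) V E. F \<subseteq> neighbours E v}"
  proof (rule image_subsetI)
    fix K assume K: "K \<in> {K \<in> cliques t V E. v \<in> K}"
    have "K - {v} \<subseteq> neighbours E v"
    proof
      fix a assume "a \<in> K - {v}"
      then show "a \<in> neighbours E v" using K cliques_edge[of K t a v] by simp
    qed
    moreover have "card (K - {v}) = t - 1"
      using K cliques_card[of K t] by simp
    moreover have "is_clique V E (K - {v})"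
      using K by (auto simp: cliques_def is_clique_def)
    ultimately show "K - {v} \<in> {F \<in> cliques (t - 1) V E. F \<subseteq> neighbours E v}"
      by (simp add: cliques_def)
  qed
  show "insert v ` {F \<in> cliques (t - 1) V E. F \<subseteq> neighbours E v} \<subseteq> {K \<in> cliques t V E. v \<in> K}"
  proof (rule image_subsetI)
    fix F assume F: "F \<in> {F \<in> cliques (t - 1) V E. F \<subseteq> neighbours E v}"
    then have "v \<notin> F" "finite F" "card F = t - 1"
      using neighbours_subset[of v] cliques_card[of F "t - 1"] by auto
    then show "insert v F \<in> {K \<in> cliques t V E. v \<in> K}"
      using F insert_is_clique[OF assms(1)] assms(2) by (auto simp: cliques_def is_clique_def)
  qed
qed (use neighbours_subset[of v] in auto)

lemma card_link_cliques_add_le: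
  "card {F \<in> cliques k V E. F \<subseteq> neighbours E v} + card (subsets_with_missing_edge E v k)
     \<le> card (neighbours E v) choose k"
proof -
  let ?cliques = "{F \<in> cliques k V E. F \<subseteq> neighbours E v}"
  let ?subsets = "{F. F \<subseteq> neighbours E v \<and> card F = k}"
  have sub: "?cliques \<union> subsets_with_missing_edge E v k \<subseteq> ?subsets"
    by (auto simp: cliques_def subsets_with_missing_edge_def)
  have fin: "finite ?subsets" using finite_neighbours by simp
  have "?cliques \<inter> subsets_with_missing_edge E v k = {}"
  proof (intro equalityI subsetI)
    fix F assume "F \<in> ?cliques \<inter> subsets_with_missing_edge E v k"
    then obtain a b where "F \<in> cliques k V E" "a \<in> F" "b \<in> F" "a \<noteq> b" "{a, b} \<notin> E"
      by (auto simp: subsets_with_missing_edge_def missing_edges_def)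
    then show "F \<in> {}" using cliques_edge by blast
  qed simp
  then have "card ?cliques + card (subsets_with_missing_edge E v k)
               = card (?cliques \<union> subsets_with_missing_edge E v k)"
    using finite_subset[OF sub fin] by (intro card_Un_disjoint[symmetric]) auto
  also have "\<dots> \<le> card ?subsets" using sub fin by (rule card_mono[rotated])
  finally show ?thesis using finite_neighbours by (simp add: n_subsets)
qed

lemma finite_missing_edges: "finite (missing_edges E v)"
  by (rule finite_subset[of _ "Pow (neighbours E v)"])
     (auto simp: missing_edges_def finite_neighbours simp del: mem_neighbours_iff)

lemma missing_edges_nonempty:
  assumes "v \<in> V" "card (neighbours E v) = r"
  shows "missing_edges E v \<noteq> {}"
proof
  assume none: "missing_edges E v = {}"
  have "is_clique V E (insert v (neighbours E v))"
  proof (rule insert_is_clique[OF assms(1) subset_refl], intro ballI impI)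
    fix a b assume "a \<in> neighbours E v" "b \<in> neighbours E v" "a \<noteq> b"
    then show "{a, b} \<in> E" using none unfolding missing_edges_def by blast
  qed
  then have "card (insert v (neighbours E v)) \<le> r" by (rule card_clique_le)
  moreover have "v \<notin> neighbours E v" using neighbours_subset by blast
  ultimately show False using assms(2) finite_neighbours by simp
qed

lemma missing_edges_subset_subsets_with_missing_edge:
  "missing_edges E v \<subseteq> subsets_with_missing_edge E v 2"
  by (auto simp: missing_edges_def subsets_with_missing_edge_def simp del: mem_neighbours_iff)

text \<open>Inclusion-exclusion over the subsets containing one of two missing edges; their common
  supersets contain at least three vertices of the neighbourhood.\<close>
lemma card_subsets_with_missing_edge_ge:
  assumes "3 \<le> k" "card (neighbours E v) = r"
    and p1: "p1 \<in> missing_edges E v" and p2: "p2 \<in> missing_edges E v" and "p1 \<noteq> p2"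
  shows "2 * ((r - 2) choose (k - 2)) \<le> card (subsets_with_missing_edge E v k) + ((r - 3) choose (k - 3))"
proof -
  define U where "U p = {F. F \<subseteq> neighbours E v \<and> card F = k \<and> p \<subseteq> F}" for p
  have fin_U: "finite (U p)" for p unfolding U_def using finite_neighbours by simp
  have card_U: "card (U p) = (r - 2) choose (k - 2)" if p: "p \<in> missing_edges E v" for p
  proof -
    obtain a b where "p = {a, b}" "a \<in> neighbours E v" "b \<in> neighbours E v" "a \<noteq> b"
      using p by (auto simp: missing_edges_def simp del: mem_neighbours_iff)
    then show ?thesis
      unfolding U_def using card_supersets_of_size[OF finite_neighbours[of v], of p k] assms(1,2)
      by (simp add: numeral_2_eq_2)
  qed
  obtain a b where ab: "p1 = {a, b}" "a \<in> neighbours E v" "b \<in> neighbours E v" "a \<noteq> b"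
    using p1 by (auto simp: missing_edges_def simp del: mem_neighbours_iff)
  obtain c where c: "c \<in> p2" "c \<notin> p1" "c \<in> neighbours E v"
    using p2 \<open>p1 \<noteq> p2\<close> ab
    by (auto simp: missing_edges_def doubleton_eq_iff simp del: mem_neighbours_iff)
  have "U p1 \<inter> U p2 \<subseteq> {F. F \<subseteq> neighbours E v \<and> card F = k \<and> {a, b, c} \<subseteq> F}"
    unfolding U_def using ab c by auto
  then have "card (U p1 \<inter> U p2) \<le> card {F. F \<subseteq> neighbours E v \<and> card F = k \<and> {a, b, c} \<subseteq> F}"
    using finite_neighbours by (intro card_mono) auto
  also have "\<dots> = (r - 3) choose (k - 3)"
    using card_supersets_of_size[OF finite_neighbours[of v], of "{a, b, c}" k] ab c assms(1,2)
    by (simp add: numeral_3_eq_3)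
  finally have "card (U p1 \<inter> U p2) \<le> (r - 3) choose (k - 3)" .
  moreover have "card (U p1 \<union> U p2) \<le> card (subsets_with_missing_edge E v k)"
    using p1 p2 finite_neighbours
    by (intro card_mono) (auto simp: U_def subsets_with_missing_edge_def simp del: mem_neighbours_iff)
  ultimately show ?thesis
    using card_Un_Int[OF fin_U fin_U, of p1 p2] card_U[OF p1] card_U[OF p2] by linarith
qed

definition reducible :: "nat \<Rightarrow> nat \<Rightarrow> bool" where
  "reducible t v \<longleftrightarrow> card (neighbours E v) = r
     \<and> (card (missing_edges E v) = 1 \<or> t = 3 \<and> 6 \<le> r \<and> card (missing_edges E v) = 2)"

lemma card_link_cliques_le_if_full:
  assumes "v \<in> V" "card (neighbours E v) = r" "3 \<le> t" "t \<le> r" "\<not> reducible t v"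
  shows "real (card {F \<in> cliques (t - 1) V E. F \<subseteq> neighbours E v}) \<le> real t * turan_density r t"
proof -
  let ?c = "card {F \<in> cliques (t - 1) V E. F \<subseteq> neighbours E v}"
  let ?m = "card (subsets_with_missing_edge E v (t - 1))"
  have c: "real ?c \<le> real (r choose (t - 1)) - real ?m"
    using card_link_cliques_add_le[of "t - 1" v] assms(2) by simp
  have many: "card (missing_edges E v) \<noteq> 1" "t = 3 \<and> 6 \<le> r \<longrightarrow> card (missing_edges E v) \<noteq> 2"
    using assms(2,5) by (auto simp: reducible_def)
  have "card (missing_edges E v) \<noteq> 0"
    using missing_edges_nonempty[OF assms(1,2)] finite_missing_edges by simp
  then have two: "2 \<le> card (missing_edges E v)" using many(1) by linarith
  show ?thesis
  proof (cases "4 \<le> t")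
    case True
    obtain p1 p2 where p: "p1 \<in> missing_edges E v" "p2 \<in> missing_edges E v" "p1 \<noteq> p2"
      using two by (rule card_ge_2E)
    then have "2 * ((r - 2) choose (t - 3)) \<le> ?m + ((r - 3) choose (t - 4))"
      using card_subsets_with_missing_edge_ge[of "t - 1" v p1 p2] True assms(2)
      by (simp add: numeral_eq_Suc)
    then have "real ?c \<le> real (r choose (t - 1)) - (2 * real ((r - 2) choose (t - 3)) - real ((r - 3) choose (t - 4)))"
      using c by linarith
    then show ?thesis using times_turan_density_ge[OF True assms(4)] by simp
  next
    case False
    then have t: "t = 3" using assms(3) by simp
    have "card (missing_edges E v) \<le> ?m"
      using missing_edges_subset_subsets_with_missing_edge t
      by (intro card_mono) (auto simp: subsets_with_missing_edge_def finite_neighbours)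
    moreover have "3 \<le> card (missing_edges E v) \<or> card (missing_edges E v) = 2 \<and> r \<le> 5"
      using many two t by auto
    ultimately have "real ?c \<le> real (r choose 2) - 3 \<or> r \<le> 5 \<and> real ?c \<le> real (r choose 2) - 2"
      using c t by auto
    then show ?thesis
      using three_times_turan_density_ge[of r] t assms(4) by auto
  qed
qed

lemma card_cliques_containing_le:
  assumes "v \<in> V" "3 \<le> t" "t \<le> r" "\<not> reducible t v"
  shows "real (card {K \<in> cliques t V E. v \<in> K}) \<le> real t * turan_density r t"
proof -
  let ?c = "card {F \<in> cliques (t - 1) V E. F \<subseteq> neighbours E v}"
  have count: "card {K \<in> cliques t V E. v \<in> K} = ?c"
    using card_cliques_containing assms by simp
  consider "card (neighbours E v) < r" | "card (neighbours E v) = r"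
    using card_neighbours_le[OF assms(1)] by linarith
  then show ?thesis
  proof cases
    case 1
    then have "?c \<le> (r - 1) choose (t - 1)"
      using card_link_cliques_add_le[of "t - 1" v]
        binomial_right_mono[of "card (neighbours E v)" "r - 1" "t - 1"] by linarith
    then show ?thesis
      using count binomial_le_times_turan_density[of t r] assms by simp
  next
    case 2
    then show ?thesis using count card_link_cliques_le_if_full assms by simp
  qed
qed

lemma card_neighbours_outside_ge:
  assumes "K \<in> cliques t V E" "K \<inter> T = {u}"
  shows "t - 1 \<le> card (neighbours E u - T)"
proof -
  have "K - {u} \<subseteq> neighbours E u - T"
  proof
    fix w assume "w \<in> K - {u}"
    then show "w \<in> neighbours E u - T" using assms cliques_edge[of K t w u] by auto
  qed
  then have "card (K - {u}) \<le> card (neighbours E u - T)"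
    using finite_neighbours[of u] by (intro card_mono) auto
  moreover have "u \<in> K" using assms(2) by blast
  ultimately show ?thesis using assms(1) cliques_card[of K t] by simp
qed

end

section \<open>The closed neighbourhood of a vertex of degree r\<close>

locale full_vertex = class_graph +
  fixes v :: nat
  assumes v_in_V: "v \<in> V" and card_neighbours_v: "card (neighbours E v) = r"
begin

abbreviation N :: "nat set" where "N \<equiv> closed_neighbours E v"

lemma N_subset_V: "N \<subseteq> V"
  using v_in_V neighbours_subset[of v] by (auto simp: closed_neighbours_def)

lemma finite_N: "finite N"
  using finite_neighbours by (simp add: closed_neighbours_def)

lemma card_N: "card N = r + 1"
proof -
  have "v \<notin> neighbours E v" using neighbours_subset[of v] by blast
  then show ?thesis using finite_neighbours card_neighbours_v by (simp add: closed_neighbours_def)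
qed

lemma missing_edgesI:
  assumes "a \<in> N" "b \<in> N" "a \<noteq> b" "{a, b} \<notin> E"
  shows "{a, b} \<in> missing_edges E v"
proof -
  have "a \<noteq> v" "b \<noteq> v" using assms by (auto simp: closed_neighbours_def insert_commute)
  then show ?thesis using assms unfolding missing_edges_def closed_neighbours_def by blast
qed

text \<open>Since N has r + 1 vertices and degrees are at most r, every neighbour of u outside N
  is paid for by a non-neighbour of u inside N.\<close>
lemma card_neighbours_outside_le:
  assumes "u \<in> N"
  shows "card (neighbours E u - N) \<le> card (N - insert u (neighbours E u))"
proof -
  have "neighbours E u \<inter> N = (N - {u}) - (N - insert u (neighbours E u))"
    using neighbours_subset[of u] by auto
  moreover have "card (N - {u}) = r" using assms finite_N card_N by simp
  moreover have "card ((N - {u}) - (N - insert u (neighbours E u)))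
                  = card (N - {u}) - card (N - insert u (neighbours E u))"
    by (rule card_Diff_subset) (use finite_N in auto)
  ultimately have "card (neighbours E u \<inter> N) = r - card (N - insert u (neighbours E u))"
    by simp
  moreover have "card (neighbours E u) = card (neighbours E u \<inter> N) + card (neighbours E u - N)"
    using finite_neighbours[of u] by (metis card_Int_Diff)
  moreover have "card (neighbours E u) \<le> r"
    using assms N_subset_V card_neighbours_le by blast
  moreover have "card (N - insert u (neighbours E u)) \<le> r"
    using assms finite_N card_N card_mono[of "N - {u}" "N - insert u (neighbours E u)"] by auto
  ultimately show ?thesis by linarith
qed

lemma clique_subset_N:
  assumes "K \<in> cliques t V E" "u \<in> K \<inter> N" "N \<subseteq> insert u (neighbours E u)"
  shows "K \<subseteq> N"
proof
  have "N - insert u (neighbours E u) = {}" using assms(3) by blast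
  then have "card (neighbours E u - N) = 0"
    using card_neighbours_outside_le[of u] assms(2) by (metis IntD2 card.empty le_zero_eq)
  then have "neighbours E u - N = {}" using finite_neighbours[of u] by simp
  fix w assume "w \<in> K"
  then have "w = u \<or> w \<in> neighbours E u" using assms cliques_edge[of K t w u] by auto
  then show "w \<in> N" using assms \<open>neighbours E u - N = {}\<close> by auto
qed

lemma cliques_inside_N:
  "{K \<in> cliques t V E. K \<subseteq> N} = {F. F \<subseteq> N \<and> card F = t \<and> (\<forall>p\<in>missing_edges E v. \<not> p \<subseteq> F)}"
proof (intro equalityI subsetI)
  fix K assume K: "K \<in> {K \<in> cliques t V E. K \<subseteq> N}"
  have "\<not> p \<subseteq> K" if "p \<in> missing_edges E v" for p
    using that K missing_edge_not_subset_clique[of K t p] by simp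
  then show "K \<in> {F. F \<subseteq> N \<and> card F = t \<and> (\<forall>p\<in>missing_edges E v. \<not> p \<subseteq> F)}"
    using K cliques_card[of K t] by auto
next
  fix F assume F: "F \<in> {F. F \<subseteq> N \<and> card F = t \<and> (\<forall>p\<in>missing_edges E v. \<not> p \<subseteq> F)}"
  have "{a, b} \<in> E" if "a \<in> F" "b \<in> F" "a \<noteq> b" for a b
  proof (rule ccontr)
    assume "{a, b} \<notin> E"
    then have "{a, b} \<in> missing_edges E v" using F that missing_edgesI[of a b] by auto
    moreover have "{a, b} \<subseteq> F" using that by simp
    ultimately show False using F by auto
  qed
  then show "F \<in> {K \<in> cliques t V E. K \<subseteq> N}"
    using F N_subset_V by (auto simp: cliques_def is_clique_def)
qed

lemma clique_meeting_N_subset_N: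
  assumes "missing_edges E v = {{x, y}}" "3 \<le> t" "K \<in> cliques t V E" "K \<inter> N \<noteq> {}"
  shows "K \<subseteq> N"
proof (rule ccontr)
  assume out: "\<not> K \<subseteq> N"
  have pair: "{w, u} = {x, y}" if "u \<in> N" "w \<in> N - insert u (neighbours E u)" for u w
    using missing_edgesI[of w u] that assms(1) by auto
  have non_neighbours: "N - insert u (neighbours E u) \<subseteq> {x, y} - {u}" if "u \<in> N" for u
  proof
    fix w assume "w \<in> N - insert u (neighbours E u)"
    then show "w \<in> {x, y} - {u}" using pair[OF that] by (auto simp: doubleton_eq_iff)
  qed
  have "K \<inter> N \<subseteq> {x, y}"
  proof
    fix u assume u: "u \<in> K \<inter> N"
    show "u \<in> {x, y}"
    proof (rule ccontr)
      assume "u \<notin> {x, y}"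
      then have "N \<subseteq> insert u (neighbours E u)" using pair[of u] u by blast
      then show False using clique_subset_N[OF assms(3) u] out by blast
    qed
  qed
  moreover have "\<not> {x, y} \<subseteq> K" using missing_edge_not_subset_clique[OF assms(3), of "{x, y}" v] assms(1) by simp
  ultimately obtain u where u: "K \<inter> N = {u}" "u \<in> N"
    using assms(4) by blast
  have "t - 1 \<le> card (neighbours E u - N)"
    using card_neighbours_outside_ge[OF assms(3) u(1)] .
  also have "\<dots> \<le> card ({x, y} - {u})"
    using card_neighbours_outside_le[OF u(2)] card_mono[OF _ non_neighbours[OF u(2)]] by simp
  also have "\<dots> \<le> 1" using u \<open>K \<inter> N \<subseteq> {x, y}\<close> by (auto simp: card_insert_if)
  finally show False using assms(2) by simp
qed

lemma missing_edge_subset_N: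
  assumes "p \<in> missing_edges E v"
  shows "p \<subseteq> N" "card p = 2"
  using assms by (auto elim!: missing_edgesE simp: closed_neighbours_def simp del: mem_neighbours_iff)

lemma card_cliques_meeting_N_one_missing:
  assumes "missing_edges E v = {{x, y}}" "3 \<le> t"
  shows "card {K \<in> cliques t V E. K \<inter> N \<noteq> {}} = ((r + 1) choose t) - ((r - 1) choose (t - 2))"
proof -
  have xy: "{x, y} \<subseteq> N" "card {x, y} = 2" using missing_edge_subset_N[of "{x, y}"] assms(1) by auto
  have "{K \<in> cliques t V E. K \<inter> N \<noteq> {}} = {K \<in> cliques t V E. K \<subseteq> N}"
  proof (intro equalityI subsetI)
    fix K assume K: "K \<in> {K \<in> cliques t V E. K \<subseteq> N}"
    then have "K \<noteq> {}" using cliques_card[of K t] assms(2) by auto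
    then show "K \<in> {K \<in> cliques t V E. K \<inter> N \<noteq> {}}" using K by auto
  qed (use clique_meeting_N_subset_N[OF assms] in blast)
  also have "\<dots> = {F. F \<subseteq> N \<and> card F = t \<and> \<not> {x, y} \<subseteq> F}"
    unfolding cliques_inside_N assms(1) by simp
  finally show ?thesis
    using card_non_supersets_of_size[OF finite_N xy(1)] xy(2) assms(2) card_N by simp
qed

end

section \<open>Triangles near a vertex whose neighbourhood misses two edges\<close>

locale two_missing_edges = full_vertex +
  fixes p1 p2 :: "nat set"
  assumes missing_edges_v: "missing_edges E v = {p1, p2}" and p1_ne_p2: "p1 \<noteq> p2"
begin

abbreviation W :: "nat set" where "W \<equiv> p1 \<union> p2"

lemma p1: "p1 \<subseteq> N" "card p1 = 2" and p2: "p2 \<subseteq> N" "card p2 = 2"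
  using missing_edge_subset_N missing_edges_v by auto

lemma card_W: "card W + card (p1 \<inter> p2) = 4" "card (p1 \<inter> p2) \<le> 1"
proof -
  show "card W + card (p1 \<inter> p2) = 4"
    using card_Un_Int[of p1 p2] p1 p2 by (simp add: card_ge_0_finite)
  have "finite p2" using p2 by (simp add: card_ge_0_finite)
  then have "\<not> p1 \<subseteq> p2" using card_seteq[of p2 p1] p1 p2 p1_ne_p2 by auto
  then have "p1 \<inter> p2 \<subset> p1" by blast
  then show "card (p1 \<inter> p2) \<le> 1"
    using psubset_card_mono[of p1 "p1 \<inter> p2"] p1 by (simp add: card_ge_0_finite)
qed

lemma non_neighbour_pair:
  assumes "u \<in> N" "w \<in> N - insert u (neighbours E u)"
  shows "{w, u} = p1 \<or> {w, u} = p2"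
  using missing_edgesI[of w u] assms missing_edges_v by auto

lemma two_non_neighbours:
  assumes "u \<in> N" "w1 \<in> N - insert u (neighbours E u)" "w2 \<in> N - insert u (neighbours E u)" "w1 \<noteq> w2"
  shows "W = {u, w1, w2}" "u \<in> p1 \<inter> p2"
proof -
  have "{w1, u} \<noteq> {w2, u}" using assms by (auto simp: doubleton_eq_iff)
  then have "{w1, u} = p1 \<and> {w2, u} = p2 \<or> {w1, u} = p2 \<and> {w2, u} = p1"
    using non_neighbour_pair[OF assms(1,2)] non_neighbour_pair[OF assms(1,3)] by auto
  then show "W = {u, w1, w2}" "u \<in> p1 \<inter> p2" by auto
qed

lemma card_non_neighbours_le_2:
  assumes "u \<in> N"
  shows "card (N - insert u (neighbours E u)) \<le> 2"
proof (cases "card (N - insert u (neighbours E u)) \<le> 1")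
  case False
  then have "2 \<le> card (N - insert u (neighbours E u))" by simp
  then obtain w1 w2 where w: "w1 \<in> N - insert u (neighbours E u)" "w2 \<in> N - insert u (neighbours E u)" "w1 \<noteq> w2"
    by (rule card_ge_2E)
  have "N - insert u (neighbours E u) \<subseteq> W - {u}"
    using non_neighbour_pair[OF assms] by blast
  then have "N - insert u (neighbours E u) \<subseteq> {w1, w2}"
    using two_non_neighbours[OF assms w] by auto
  then have "card (N - insert u (neighbours E u)) \<le> card {w1, w2}" by (rule card_mono[rotated]) simp
  also have "\<dots> \<le> 2" by (simp add: card_insert_if)
  finally show ?thesis .
qed simp

lemma outside_clique_vertex_in_W:
  assumes "K \<in> cliques t V E" "\<not> K \<subseteq> N" "u \<in> K \<inter> N"
  shows "u \<in> W"
proof -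
  obtain w where "w \<in> N - insert u (neighbours E u)"
    using clique_subset_N[OF assms(1,3)] assms(2) by blast
  then show ?thesis using non_neighbour_pair assms(3) by blast
qed

lemma card_triples_containing_W:
  "card {F. F \<subseteq> N \<and> card F = 3 \<and> W \<subseteq> F} \<le> card (p1 \<inter> p2)"
proof -
  consider "card (p1 \<inter> p2) = 0" "card W = 4" | "card (p1 \<inter> p2) = 1" "card W = 3"
    using card_W by linarith
  then show ?thesis
  proof cases
    case 1
    then show ?thesis using card_supersets_of_size_eq_0[OF finite_N, of 3 W] by simp
  next
    case 2
    moreover have "W \<subseteq> N" using p1 p2 by simp
    ultimately show ?thesis using card_supersets_of_size[OF finite_N, of W 3] by simp
  qed
qed

lemma card_triangles_inside_N:
  "card {K \<in> cliques 3 V E. K \<subseteq> N} + 2 * (r - 1) \<le> ((r + 1) choose 3) + card (p1 \<inter> p2)"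
proof -
  define U where "U A = {F. F \<subseteq> N \<and> card F = 3 \<and> A \<subseteq> F}" for A
  let ?triples = "{F. F \<subseteq> N \<and> card F = 3}"
  have fin: "finite ?triples" using finite_N by simp
  have U_triples: "U p1 \<union> U p2 \<subseteq> ?triples" by (auto simp: U_def)
  have fin_U: "finite (U A)" for A unfolding U_def using finite_N by simp
  have "{K \<in> cliques 3 V E. K \<subseteq> N} = ?triples - (U p1 \<union> U p2)"
    unfolding cliques_inside_N missing_edges_v U_def by auto
  then have "card {K \<in> cliques 3 V E. K \<subseteq> N} = card ?triples - card (U p1 \<union> U p2)"
    using fin_U U_triples by (simp add: card_Diff_subset)
  moreover have "card (U p1 \<union> U p2) \<le> card ?triples" by (rule card_mono[OF fin U_triples])
  moreover have "card ?triples = (r + 1) choose 3" using finite_N card_N by (simp add: n_subsets)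
  moreover have "card (U p) = r - 1" if "p \<subseteq> N" "card p = 2" for p
    unfolding U_def using card_supersets_of_size[OF finite_N that(1), of 3] that(2) card_N by simp
  then have "card (U p1 \<union> U p2) + card (U p1 \<inter> U p2) = 2 * (r - 1)"
    using card_Un_Int[OF fin_U fin_U, of p1 p2] p1 p2 by simp
  moreover have "U p1 \<inter> U p2 = {F. F \<subseteq> N \<and> card F = 3 \<and> W \<subseteq> F}" unfolding U_def by auto
  then have "card (U p1 \<inter> U p2) \<le> card (p1 \<inter> p2)" using card_triples_containing_W by (simp only:)
  ultimately show ?thesis by linarith
qed

lemma triangle_with_one_vertex_in_N:
  assumes "K \<in> cliques 3 V E" "K \<inter> N = {u}"
  shows "u \<in> p1 \<inter> p2" "K = insert u (neighbours E u - N)"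
proof -
  have u: "u \<in> N" "u \<in> K" using assms(2) by auto
  have "2 \<le> card (neighbours E u - N)"
    using card_neighbours_outside_ge[OF assms] by simp
  also have "\<dots> \<le> card (N - insert u (neighbours E u))"
    by (rule card_neighbours_outside_le[OF u(1)])
  finally obtain w1 w2 where w: "w1 \<in> N - insert u (neighbours E u)" "w2 \<in> N - insert u (neighbours E u)" "w1 \<noteq> w2"
    by (rule card_ge_2E)
  then show "u \<in> p1 \<inter> p2" using two_non_neighbours[OF u(1)] by blast
  have "K - {u} \<subseteq> neighbours E u - N"
  proof
    fix w assume "w \<in> K - {u}"
    then show "w \<in> neighbours E u - N" using assms cliques_edge[of K 3 w u] u by auto
  qed
  moreover have "card (neighbours E u - N) \<le> card (K - {u})"
    using card_neighbours_outside_le[OF u(1)] card_non_neighbours_le_2[OF u(1)]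
      cliques_card[OF assms(1)] u by simp
  ultimately have "K - {u} = neighbours E u - N"
    using finite_neighbours[of u] by (intro card_seteq) auto
  then show "K = insert u (neighbours E u - N)" using u by blast
qed

lemma card_triangles_one_vertex_in_N:
  "card {K \<in> cliques 3 V E. \<not> K \<subseteq> N \<and> card (K \<inter> N) = 1} \<le> card (p1 \<inter> p2)"
proof -
  have fin: "finite (p1 \<inter> p2)" using p1 finite_subset[OF _ finite_N] by blast
  have "{K \<in> cliques 3 V E. \<not> K \<subseteq> N \<and> card (K \<inter> N) = 1}
          \<subseteq> (\<lambda>u. insert u (neighbours E u - N)) ` (p1 \<inter> p2)" (is "?one \<subseteq> ?image")
  proof
    fix K assume "K \<in> {K \<in> cliques 3 V E. \<not> K \<subseteq> N \<and> card (K \<inter> N) = 1}"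
    then obtain u where K: "K \<in> cliques 3 V E" "K \<inter> N = {u}" by (auto simp: card_1_singleton_iff)
    then show "K \<in> (\<lambda>u. insert u (neighbours E u - N)) ` (p1 \<inter> p2)"
      using triangle_with_one_vertex_in_N[OF K] by blast
  qed
  then have "card ?one \<le> card ?image" using fin by (intro card_mono) auto
  also have "\<dots> \<le> card (p1 \<inter> p2)" using fin by (rule card_image_le)
  finally show ?thesis .
qed

text \<open>A triangle sharing the pair x, y with N is determined by it: two such triangles would give
  x two neighbours outside N, hence two non-neighbours in N, which forces W = {x, w1, w2};
  but y lies in W and is adjacent to x.\<close>
lemma triangles_two_vertices_in_N_inj:
  "inj_on (\<lambda>K. K \<inter> N) {K \<in> cliques 3 V E. \<not> K \<subseteq> N \<and> card (K \<inter> N) = 2}"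
proof (rule inj_onI, rule ccontr)
  fix K1 K2
  assume K1: "K1 \<in> {K \<in> cliques 3 V E. \<not> K \<subseteq> N \<and> card (K \<inter> N) = 2}"
    and K2: "K2 \<in> {K \<in> cliques 3 V E. \<not> K \<subseteq> N \<and> card (K \<inter> N) = 2}"
    and eq: "K1 \<inter> N = K2 \<inter> N" and "K1 \<noteq> K2"
  obtain x y where xy: "K1 \<inter> N = {x, y}" "x \<noteq> y" using K1 by (auto simp: card_2_iff)
  have outside: "card (K - N) = 1" if "K \<in> {K \<in> cliques 3 V E. \<not> K \<subseteq> N \<and> card (K \<inter> N) = 2}" for K
    using that cliques_card[of K 3] by (simp add: card_Diff_subset_Int)
  obtain z1 where z1: "K1 - N = {z1}" using outside[OF K1] by (rule card_1_singletonE)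
  obtain z2 where z2: "K2 - N = {z2}" using outside[OF K2] by (rule card_1_singletonE)
  have "K1 = {x, y} \<union> {z1}" using xy(1) z1 Int_Diff_Un[of K1 N] by simp
  moreover have "K2 = {x, y} \<union> {z2}" using xy(1) z2 eq Int_Diff_Un[of K2 N] by simp
  ultimately have "z1 \<noteq> z2" using \<open>K1 \<noteq> K2\<close> by auto
  have outside_neighbour: "z \<in> neighbours E x - N"
    if "K \<in> cliques 3 V E" "x \<in> K \<inter> N" "K - N = {z}" for K z
  proof -
    have "z \<in> K" "z \<notin> N" "z \<noteq> x" using that by auto
    then show ?thesis using that cliques_edge[of K 3 z x] by simp
  qed
  have "x \<in> K1 \<inter> N" "x \<in> K2 \<inter> N" using xy(1) eq by auto
  then have "{z1, z2} \<subseteq> neighbours E x - N"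
    using outside_neighbour[of K1 z1] outside_neighbour[of K2 z2] K1 K2 z1 z2 by simp
  then have "card {z1, z2} \<le> card (neighbours E x - N)"
    using finite_neighbours[of x] by (intro card_mono) auto
  then have "2 \<le> card (neighbours E x - N)" using \<open>z1 \<noteq> z2\<close> by simp
  also have "\<dots> \<le> card (N - insert x (neighbours E x))"
    by (rule card_neighbours_outside_le) (use xy in auto)
  finally obtain w1 w2 where w: "w1 \<in> N - insert x (neighbours E x)" "w2 \<in> N - insert x (neighbours E x)" "w1 \<noteq> w2"
    by (rule card_ge_2E)
  have x: "x \<in> K1" "x \<in> N" and y: "y \<in> K1" "y \<in> N" using xy(1) by auto
  have "y \<in> W" using outside_clique_vertex_in_W[of K1 3 y] K1 y by simp
  moreover have "W = {x, w1, w2}" by (rule two_non_neighbours(1)[OF x(2) w])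
  ultimately have "y \<in> N - insert x (neighbours E x)" using w xy(2) by auto
  moreover have "{y, x} \<in> E" using cliques_edge[of K1 3 y x] K1 x(1) y(1) xy(2) by simp
  ultimately show False by simp
qed

lemma card_triangles_two_vertices_in_N:
  "card {K \<in> cliques 3 V E. \<not> K \<subseteq> N \<and> card (K \<inter> N) = 2} \<le> (card W choose 2) - 2"
proof -
  let ?pairs = "{P. P \<subseteq> W \<and> card P = 2}"
  have fin_W: "finite W" using p1 p2 finite_subset[OF _ finite_N] by blast
  have "(\<lambda>K. K \<inter> N) ` {K \<in> cliques 3 V E. \<not> K \<subseteq> N \<and> card (K \<inter> N) = 2} \<subseteq> ?pairs - {p1, p2}"
  proof
    fix P assume "P \<in> (\<lambda>K. K \<inter> N) ` {K \<in> cliques 3 V E. \<not> K \<subseteq> N \<and> card (K \<inter> N) = 2}"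
    then obtain K where K: "K \<in> cliques 3 V E" "\<not> K \<subseteq> N" "card (K \<inter> N) = 2" "P = K \<inter> N" by blast
    have "P \<subseteq> W" using outside_clique_vertex_in_W[OF K(1,2)] K(4) by blast
    moreover have "P \<noteq> p1" "P \<noteq> p2"
      using missing_edge_not_subset_clique[OF K(1)] missing_edges_v K(4) by auto
    ultimately show "P \<in> ?pairs - {p1, p2}" using K by auto
  qed
  then have "card {K \<in> cliques 3 V E. \<not> K \<subseteq> N \<and> card (K \<inter> N) = 2} \<le> card (?pairs - {p1, p2})"
    using fin_W by (intro card_inj_on_le[OF triangles_two_vertices_in_N_inj]) auto
  also have "\<dots> = (card W choose 2) - 2"
    using fin_W p1 p2 p1_ne_p2 by (simp add: card_Diff_subset n_subsets)
  finally show ?thesis .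
qed

lemma card_triangles_meeting_N:
  assumes "5 \<le> r"
  shows "card {K \<in> cliques 3 V E. K \<inter> N \<noteq> {}} + (r - 1) \<le> (r + 1) choose 3"
proof -
  let ?inside = "{K \<in> cliques 3 V E. K \<subseteq> N}"
  let ?one = "{K \<in> cliques 3 V E. \<not> K \<subseteq> N \<and> card (K \<inter> N) = 1}"
  let ?two = "{K \<in> cliques 3 V E. \<not> K \<subseteq> N \<and> card (K \<inter> N) = 2}"
  have "{K \<in> cliques 3 V E. K \<inter> N \<noteq> {}} \<subseteq> ?inside \<union> ?one \<union> ?two"
  proof
    fix K assume K: "K \<in> {K \<in> cliques 3 V E. K \<inter> N \<noteq> {}}"
    then have "finite K" "card K = 3" using cliques_card[of K 3] by auto
    moreover have "\<not> K \<subseteq> N \<Longrightarrow> card (K \<inter> N) < card K"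
      using \<open>finite K\<close> by (intro psubset_card_mono) auto
    moreover have "card (K \<inter> N) \<noteq> 0" using K \<open>finite K\<close> by auto
    ultimately show "K \<in> ?inside \<union> ?one \<union> ?two" using K by force
  qed
  then have "card {K \<in> cliques 3 V E. K \<inter> N \<noteq> {}} \<le> card (?inside \<union> ?one \<union> ?two)"
    using finite_cliques[OF finite_V, of 3 E] by (intro card_mono) auto
  also have "\<dots> \<le> card ?inside + card ?one + card ?two"
    using card_Un_le[of ?inside ?one] card_Un_le[of "?inside \<union> ?one" ?two] by linarith
  finally have meet: "card {K \<in> cliques 3 V E. K \<inter> N \<noteq> {}} \<le> card ?inside + card ?one + card ?two" .
  have "card ?two + 2 * card (p1 \<inter> p2) \<le> 4"
  proof -
    have binomials: "(4::nat) choose 2 = 6" "(3::nat) choose 2 = 3" by (simp_all add: numeral_eq_Suc)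
    consider "card (p1 \<inter> p2) = 0" "card W = 4" | "card (p1 \<inter> p2) = 1" "card W = 3"
      using card_W by linarith
    then show ?thesis using card_triangles_two_vertices_in_N binomials by cases simp_all
  qed
  moreover have "4 \<le> r - 1" using assms by simp
  ultimately show ?thesis
    using meet card_triangles_inside_N card_triangles_one_vertex_in_N by linarith
qed

end

section \<open>The upper bound\<close>

context class_graph
begin

lemma card_cliques_meeting_reducible:
  assumes "v \<in> V" "reducible t v" "3 \<le> t" "t \<le> r"
  shows "real (card {K \<in> cliques t V E. K \<inter> closed_neighbours E v \<noteq> {}}) \<le> real (r + 1) * turan_density r t"
proof -
  interpret full_vertex V E r v
    using assms(1,2) by unfold_locales (auto simp: reducible_def)
  have density: "real (r + 1) * turan_density r t = real ((r + 1) choose t) - real ((r - 1) choose (t - 2))"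
    by (simp add: turan_density_def)
  consider (one) "card (missing_edges E v) = 1" | (two) "t = 3" "6 \<le> r" "card (missing_edges E v) = 2"
    using assms(2) by (auto simp: reducible_def)
  then show ?thesis
  proof cases
    case one
    then obtain p where "missing_edges E v = {p}" by (rule card_1_singletonE)
    moreover obtain x y where "p = {x, y}"
      using calculation missing_edgesE[of p v] by blast
    ultimately have "card {K \<in> cliques t V E. K \<inter> N \<noteq> {}} = ((r + 1) choose t) - ((r - 1) choose (t - 2))"
      using card_cliques_meeting_N_one_missing assms(3) by simp
    then show ?thesis
      using density binomial_minus_le[of r t] assms by (simp add: of_nat_diff)
  next
    case two
    then obtain p1 p2 where "missing_edges E v = {p1, p2}" "p1 \<noteq> p2" by (auto simp: card_2_iff)
    then interpret two_missing_edges V E r v p1 p2 by unfold_locales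
    have "card {K \<in> cliques 3 V E. K \<inter> N \<noteq> {}} + (r - 1) \<le> (r + 1) choose 3"
      using card_triangles_meeting_N two by simp
    then show ?thesis using density two by (simp add: of_nat_diff)
  qed
qed

lemma card_cliques_le_if_irreducible:
  assumes "3 \<le> t" "t \<le> r" "\<forall>v\<in>V. \<not> reducible t v"
  shows "real (card (cliques t V E)) \<le> turan_density r t * real (card V)"
proof -
  have "real t * real (card (cliques t V E)) = (\<Sum>v\<in>V. real (card {K \<in> cliques t V E. v \<in> K}))"
    using sum_card_cliques_containing[OF finite_V, of t E] by (metis of_nat_mult of_nat_sum)
  also have "\<dots> \<le> (\<Sum>v\<in>V. real t * turan_density r t)"
    using card_cliques_containing_le assms by (intro sum_mono) auto
  also have "\<dots> = real t * (turan_density r t * real (card V))" by simp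
  finally show ?thesis using assms(1) by simp
qed

end

lemma card_cliques_le_turan_density:
  assumes "in_class r r V E" "3 \<le> t" "t \<le> r"
  shows "real (card (cliques t V E)) \<le> turan_density r t * real (card V)"
  using assms(1)
proof (induction "card V" arbitrary: V E rule: less_induct)
  case less
  interpret class_graph V E r by (rule class_graph.intro) (rule less.prems)
  show ?case
  proof (cases "\<exists>v\<in>V. reducible t v")
    case True
    then obtain v where v: "v \<in> V" "reducible t v" by blast
    interpret full_vertex V E r v
      using v by unfold_locales (auto simp: reducible_def)
    have card_rest: "card (V - N) = card V - (r + 1)" "card (V - N) < card V"
      using N_subset_V finite_N card_N card_mono[OF finite_V N_subset_V] by (auto simp: card_Diff_subset)
    have "real (card (cliques t V E))
            = real (card (cliques t (V - N) {e \<in> E. e \<subseteq> V - N})) + real (card {K \<in> cliques t V E. K \<inter> N \<noteq> {}})"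
      using card_cliques_remove[OF finite_V, of t E N] by simp
    also have "\<dots> \<le> turan_density r t * real (card (V - N)) + real (r + 1) * turan_density r t"
      using less.hyps[OF card_rest(2) in_class_remove[OF less.prems]]
        card_cliques_meeting_reducible[OF v assms(2,3)] by (rule add_mono)
    also have "\<dots> = turan_density r t * real (card V)"
      using card_rest card_mono[OF finite_V N_subset_V] card_N by (simp add: of_nat_diff algebra_simps)
    finally show ?thesis .
  next
    case False
    then show ?thesis by (intro card_cliques_le_if_irreducible assms(2,3)) blast
  qed
qed

lemma rho_t_turan:
  assumes "3 \<le> t" "t \<le> r"
  shows "rho_t t (turan_V (r + 1)) (turan_E (r + 1) r) = turan_density r t"
  using k_t_turan[of r t] binomial_minus_le[of r t] assms
  by (simp add: rho_t_def turan_V_def turan_density_def of_nat_diff)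

lemma f_t_eq_turan_density:
  assumes "3 \<le> t" "t \<le> r"
  shows "f_t t r r = turan_density r t"
  unfolding f_t_def
proof (rule cSup_eq_maximum)
  show "turan_density r t \<in> {rho_t t V E |V E. in_class r r V E \<and> 1 \<le> card V}"
    using in_class_turan[of r] rho_t_turan assms by (force simp: turan_V_def)
  fix x assume "x \<in> {rho_t t V E |V E. in_class r r V E \<and> 1 \<le> card V}"
  then obtain V E where "x = rho_t t V E" "in_class r r V E" "1 \<le> card V" by blast
  then show "x \<le> turan_density r t"
    using card_cliques_le_turan_density[of r V E t] assms
    by (simp add: rho_t_def k_t_eq_card_cliques divide_le_eq)
qed

theorem mainTheorem10:
  fixes r t :: nat
  assumes "3 \<le> t" and "t \<le> r"
  shows "f_t t r r = rho_t t (turan_V (r + 1)) (turan_E (r + 1) r)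
       \<and> rho_t t (turan_V (r + 1)) (turan_E (r + 1) r)
           = (1 / real (r + 1)) * (real ((r + 1) choose t) - real ((r - 1) choose (t - 2)))"
  using f_t_eq_turan_density[OF assms] rho_t_turan[OF assms] by (simp add: turan_density_def)

end
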